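(* Let $m,r$ be integers with $m>1$, $r>2$. Every numerical semigroup $S\in\mathcal{MA}(m,r)$ has exactly $\left\lfloor\frac{\mathrm{F}(S)-\mathrm{M}(S)}{m}\right\rfloor+1$ children in the graph $G(\mathcal{MA}(m,r))$.
   Context: $\mathbb{N}=\{0,1,2,\ldots\}$. A numerical semigroup is a subset $S\subseteq\mathbb{N}$ closed under addition, containing $0$, with finite complement; $\mathrm{msg}(S)=\{n_1<\cdots<n_e\}$ is its unique finite minimal system of generators, $\mathrm{m}(S)=n_1$, $\mathrm{r}(S)=n_2$, $\mathrm{M}(S)=n_e$; $\mathrm{F}(S)$ is the largest integer not in $S$. $S$ is a MANS-semigroup if $w(1)<\cdots<w(\mathrm{m}(S)-1)$, where $w(i)$ is the least element of $S$ congruent to $i$ modulo $\mathrm{m}(S)$. $\mathcal{MA}(m,r)$ is the set of MANS-semigroups $S$ with $\mathrm{m}(S)=m$ and $\mathrm{r}(S)=r$. $G(\mathcal{MA}(m,r))$ is the directed graph with vertex set $\mathcal{MA}(m,r)$ in which $(T,S)$ is an edge iff $\mathrm{msg}(S)=\mathrm{msg}(T)\setminus\{\mathrm{M}(T)\}$; in that case $T$ is a child of $S$. *)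

theory Defs
  imports Main
begin

definition numerical_semigroup :: "nat set \<Rightarrow> bool" where
  "numerical_semigroup S \<longleftrightarrow> 0 \<in> S \<and> (\<forall>x\<in>S. \<forall>y\<in>S. x + y \<in> S) \<and> finite (UNIV - S)"

inductive_set generated :: "nat set \<Rightarrow> nat set" for A :: "nat set" where
  gen_zero: "0 \<in> generated A"
| gen_add: "a \<in> A \<Longrightarrow> x \<in> generated A \<Longrightarrow> a + x \<in> generated A"

definition msg :: "nat set \<Rightarrow> nat set" where
  "msg S = (THE A. generated A = S \<and> (\<forall>B. B \<subset> A \<longrightarrow> generated B \<noteq> S))"

definition mult :: "nat set \<Rightarrow> nat" where
  "mult S = Min (msg S)"

definition rgen :: "nat set \<Rightarrow> nat" where
  "rgen S = Min (msg S - {mult S})"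

definition maxgen :: "nat set \<Rightarrow> nat" where
  "maxgen S = Max (msg S)"

definition frobenius :: "nat set \<Rightarrow> int" where
  "frobenius S = int (Max (UNIV - S))"

definition apery_w :: "nat set \<Rightarrow> nat \<Rightarrow> nat" where
  "apery_w S i = (LEAST x. x \<in> S \<and> x mod mult S = i)"

definition MANS :: "nat set \<Rightarrow> bool" where
  "MANS S \<longleftrightarrow> (\<forall>i j. 1 \<le> i \<and> i < j \<and> j \<le> mult S - 1 \<longrightarrow> apery_w S i < apery_w S j)"

definition MA :: "nat \<Rightarrow> nat \<Rightarrow> nat set set" where
  "MA m r = {S. numerical_semigroup S \<and> MANS S \<and> mult S = m \<and> rgen S = r}"

definition children_MA :: "nat \<Rightarrow> nat \<Rightarrow> nat set \<Rightarrow> nat set set" where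
  "children_MA m r S = {T \<in> MA m r. msg S = msg T - {maxgen T}}"

end

theory Submission
  imports Defs
begin

text \<open>
  Let m be the multiplicity of S and w(1) < ... < w(m-1) its Apery set. A child T of S has
  msg T = msg S + {x} with x = M(T) > M(S) and x not in S, so that T = S + Nx. Since
  M(S) = w(j) for j = M(S) mod m >= 1, such an x lies in a residue class i > j, and T is again
  a MANS-semigroup iff w(i-1) < x (< w(i)): MANS means that every element of residue at least 2
  has a smaller element of the preceding residue, and for the elements x + u with u = 0 (mod m)
  of S + Nx this predecessor must come from S. Class i contributes (w(i) - w(i-1) - 1)/m
  admissible x, and the sum telescopes: m * #children + (m - 1 - j) = w(m-1) - M(S)
  = F(S) + m - M(S).
\<close>

lemma mod_eq_less_imp_add_le:
  fixes y z m :: nat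
  assumes "y mod m = z mod m" and "y < z"
  shows "y + m \<le> z"
proof -
  obtain k where "z = y + m * k"
    using assms by (metis less_imp_le mod_eq_nat1E)
  with \<open>y < z\<close> show ?thesis
    by (cases k) auto
qed

lemma card_mod_class_interval:
  fixes a b m :: nat
  assumes "0 < m" and "a < b" and "Suc a mod m = b mod m"
  shows "m * card {x. a < x \<and> x < b \<and> x mod m = b mod m} + Suc a = b"
proof -
  obtain k where b: "b = Suc a + m * k"
    using assms(2,3) by (metis Suc_leI mod_eq_nat1E)
  have "{x. a < x \<and> x < b \<and> x mod m = b mod m} = (\<lambda>i. Suc a + m * i) ` {..<k}"
  proof (intro equalityI subsetI)
    fix x assume x: "x \<in> {x. a < x \<and> x < b \<and> x mod m = b mod m}"
    then have "x mod m = Suc a mod m" and "Suc a \<le> x"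
      using assms(3) by simp_all
    then obtain i where "x = Suc a + m * i"
      by (rule mod_eq_nat1E)
    moreover from this have "i < k"
      using x b by simp
    ultimately show "x \<in> (\<lambda>i. Suc a + m * i) ` {..<k}"
      by blast
  qed (use b assms(1) in auto)
  moreover have "inj_on (\<lambda>i. Suc a + m * i) {..<k}"
    using assms(1) by (simp add: inj_on_def)
  ultimately show ?thesis
    using b by (simp add: card_image)
qed

lemma int_div_add_mult:
  fixes m c d :: nat
  assumes "d < m"
  shows "(int (m * c + d) - int m) div int m = int c - 1"
proof -
  have eq: "int (m * c + d) - int m = int d + (int c - 1) * int m"
    by (simp add: algebra_simps)
  show ?thesis
    unfolding eq using assms by simp
qed

lemma generated_add:
  assumes "x \<in> generated A" and "y \<in> generated A"
  shows "x + y \<in> generated A"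
  using assms by (induction x rule: generated.induct) (auto simp: add.assoc intro: gen_add)

lemma generated_mono:
  assumes "A \<subseteq> B"
  shows "generated A \<subseteq> generated B"
proof
  fix x assume "x \<in> generated A"
  then show "x \<in> generated B"
    using assms by (induction x rule: generated.induct) (auto intro: generated.intros)
qed

lemma generators_subset_generated: "A \<subseteq> generated A"
  using gen_add[OF _ gen_zero] by fastforce

lemma generated_least:
  assumes "A \<subseteq> S" and "0 \<in> S" and "\<And>x y. x \<in> S \<Longrightarrow> y \<in> S \<Longrightarrow> x + y \<in> S"
  shows "generated A \<subseteq> S"
proof
  fix x assume "x \<in> generated A"
  then show "x \<in> S"
    using assms by (induction x rule: generated.induct) auto
qed

lemma generated_nonzero_decomp:
  assumes "t \<in> generated A" and "t \<noteq> 0"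
  obtains a y where "a \<in> A" "a \<noteq> 0" "y \<in> generated A" "t = a + y"
  using assms
proof (induction t arbitrary: thesis rule: generated.induct)
  case (gen_add a t)
  show ?case
  proof (cases "a = 0")
    case True
    with gen_add.prems gen_add.IH show ?thesis by auto
  next
    case False
    with gen_add.hyps gen_add.prems(1) show ?thesis by blast
  qed
qed simp

lemma generated_insert_cases:
  assumes "t \<in> generated (insert x A)"
  shows "t \<in> generated A \<or> (\<exists>u \<in> generated (insert x A). t = x + u)"
  using assms
proof (induction t rule: generated.induct)
  case (gen_add a t)
  show ?case
  proof (cases "a = x")
    case False
    with gen_add.hyps(1) have "a \<in> A"
      by simp
    with gen_add.IH show ?thesis
      by (metis add.left_commute generated.gen_add gen_add.hyps(1))
  qed (use gen_add.hyps in blast)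
qed (simp add: gen_zero)

definition atoms :: "nat set \<Rightarrow> nat set" where
  "atoms S = {y \<in> S. y \<noteq> 0 \<and> (\<forall>a \<in> S. \<forall>b \<in> S. y = a + b \<longrightarrow> a = 0 \<or> b = 0)}"

lemma atomsI:
  assumes "y \<in> S" and "y \<noteq> 0" and "\<And>a b. a \<in> S \<Longrightarrow> b \<in> S \<Longrightarrow> y = a + b \<Longrightarrow> a = 0 \<or> b = 0"
  shows "y \<in> atoms S"
  using assms unfolding atoms_def by blast

lemma atomsD:
  assumes "y \<in> atoms S"
  shows "y \<in> S" and "y \<noteq> 0" and "a \<in> S \<Longrightarrow> b \<in> S \<Longrightarrow> y = a + b \<Longrightarrow> a = 0 \<or> b = 0"
  using assms unfolding atoms_def by blast+

lemma atoms_subset_generators: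
  assumes "generated A = S"
  shows "atoms S \<subseteq> A"
proof
  fix y assume y: "y \<in> atoms S"
  then obtain a z where "a \<in> A" "a \<noteq> 0" "z \<in> generated A" "y = a + z"
    using generated_nonzero_decomp atomsD(1,2) assms by metis
  moreover have "a \<in> S"
    using \<open>a \<in> A\<close> generators_subset_generated assms by blast
  ultimately show "y \<in> A"
    using atomsD(3)[OF y] assms by force
qed

lemma numerical_semigroup_add:
  "numerical_semigroup S \<Longrightarrow> x \<in> S \<Longrightarrow> y \<in> S \<Longrightarrow> x + y \<in> S"
  and numerical_semigroup_zero: "numerical_semigroup S \<Longrightarrow> 0 \<in> S"
  by (auto simp: numerical_semigroup_def)

lemma numerical_semigroup_cofinite:
  assumes "numerical_semigroup S"
  shows "\<exists>N. \<forall>y \<ge> N. y \<in> S"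
proof -
  have "finite (UNIV - S)"
    using assms by (simp add: numerical_semigroup_def)
  then obtain N where "\<forall>n \<in> UNIV - S. n < N"
    by (auto simp: finite_nat_set_iff_bounded)
  then show ?thesis
    by (metis DiffI UNIV_I not_le)
qed

lemma generated_atoms:
  assumes "numerical_semigroup S"
  shows "generated (atoms S) = S"
proof
  show "generated (atoms S) \<subseteq> S"
    using assms by (intro generated_least) (auto simp: atoms_def numerical_semigroup_def)
  show "S \<subseteq> generated (atoms S)"
  proof
    fix y assume "y \<in> S"
    then show "y \<in> generated (atoms S)"
    proof (induction y rule: less_induct)
      case (less y)
      show ?case
      proof (cases "y = 0 \<or> y \<in> atoms S")
        case True
        then show ?thesis
          using gen_zero generators_subset_generated by blast
      next
        case False
        then have "\<exists>a \<in> S. \<exists>b \<in> S. y = a + b \<and> a \<noteq> 0 \<and> b \<noteq> 0"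
          using less.prems unfolding atoms_def by blast
        then obtain a b where "a \<in> S" "b \<in> S" "a \<noteq> 0" "b \<noteq> 0" "y = a + b"
          by blast
        then show ?thesis
          using less.IH generated_add by simp
      qed
    qed
  qed
qed

lemma msg_eq_atoms:
  assumes "numerical_semigroup S"
  shows "msg S = atoms S"
  unfolding msg_def
proof (rule the_equality)
  show "generated (atoms S) = S \<and> (\<forall>B. B \<subset> atoms S \<longrightarrow> generated B \<noteq> S)"
    using generated_atoms[OF assms] atoms_subset_generators by (auto simp: psubset_eq)
next
  fix A assume A: "generated A = S \<and> (\<forall>B. B \<subset> A \<longrightarrow> generated B \<noteq> S)"
  then have "atoms S \<subseteq> A"
    using atoms_subset_generators by blast
  with A show "A = atoms S"
    using generated_atoms[OF assms] by (metis psubset_eq)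
qed

lemma finite_atoms:
  assumes "numerical_semigroup S"
  shows "finite (atoms S)"
proof -
  obtain N where N: "\<forall>y \<ge> N. y \<in> S"
    using numerical_semigroup_cofinite[OF assms] by blast
  have "y < 2 * N + 2" if y: "y \<in> atoms S" for y
  proof (rule ccontr)
    assume "\<not> y < 2 * N + 2"
    then have "N + 1 \<in> S" and "y - (N + 1) \<in> S"
      using N by simp_all
    with \<open>\<not> y < 2 * N + 2\<close> show False
      using atomsD(3)[OF y, of "N + 1" "y - (N + 1)"] by simp
  qed
  then have "atoms S \<subseteq> {..< 2 * N + 2}"
    by blast
  then show ?thesis
    using finite_subset by auto
qed

lemma atoms_nonempty:
  assumes "numerical_semigroup S"
  shows "atoms S \<noteq> {}"
proof -
  obtain N where "\<forall>y \<ge> N. y \<in> S"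
    using numerical_semigroup_cofinite[OF assms] by blast
  then have "Suc N \<in> generated (atoms S)"
    using generated_atoms[OF assms] by simp
  moreover have "Suc N \<noteq> 0"
    by simp
  ultimately obtain a y where "a \<in> atoms S"
    by (rule generated_nonzero_decomp)
  then show ?thesis
    by blast
qed

lemma mult_mem_atoms:
  assumes "numerical_semigroup S"
  shows "mult S \<in> atoms S"
  using Min_in[OF finite_atoms atoms_nonempty] assms by (simp add: mult_def msg_eq_atoms)

lemma mult_pos: "numerical_semigroup S \<Longrightarrow> 0 < mult S"
  and mult_mem: "numerical_semigroup S \<Longrightarrow> mult S \<in> S"
  using atomsD(1,2)[OF mult_mem_atoms] by auto

lemma mult_le:
  assumes "numerical_semigroup S" and "s \<in> S" and "s \<noteq> 0"
  shows "mult S \<le> s"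
proof -
  from assms have "s \<in> generated (atoms S)"
    by (simp add: generated_atoms)
  then obtain a y where "a \<in> atoms S" "s = a + y"
    using \<open>s \<noteq> 0\<close> by (rule generated_nonzero_decomp)
  then show ?thesis
    using finite_atoms[OF assms(1)] by (simp add: mult_def msg_eq_atoms[OF assms(1)] trans_le_add1)
qed

lemma multiple_of_mult_mem:
  assumes "numerical_semigroup S"
  shows "mult S * k \<in> S"
  by (induction k) (simp_all add: assms numerical_semigroup_zero numerical_semigroup_add mult_mem)

lemma apery_w_mem:
  assumes "numerical_semigroup S" and "i < mult S"
  shows "apery_w S i \<in> S" and "apery_w S i mod mult S = i"
proof -
  obtain N where "\<forall>y \<ge> N. y \<in> S"
    using numerical_semigroup_cofinite[OF assms(1)] by blast
  moreover have "N \<le> mult S * N + i"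
    using mult_pos[OF assms(1)] by (simp add: trans_le_add1)
  ultimately have "\<exists>y. y \<in> S \<and> y mod mult S = i"
    using assms(2) by (intro exI[of _ "mult S * N + i"]) simp
  then have "apery_w S i \<in> S \<and> apery_w S i mod mult S = i"
    unfolding apery_w_def by (rule LeastI_ex)
  then show "apery_w S i \<in> S" and "apery_w S i mod mult S = i"
    by simp_all
qed

lemma apery_w_le:
  assumes "s \<in> S"
  shows "apery_w S (s mod mult S) \<le> s"
  unfolding apery_w_def using assms by (simp add: Least_le)

lemma apery_w_0:
  assumes "numerical_semigroup S"
  shows "apery_w S 0 = 0"
  using apery_w_le[OF numerical_semigroup_zero[OF assms]] by simp

lemma Suc_apery_w_pred_mod:
  assumes "numerical_semigroup S" and "0 < k" and "k < mult S"
  shows "Suc (apery_w S (k - 1)) mod mult S = k"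
proof -
  have "apery_w S (k - 1) mod mult S = k - 1"
    using apery_w_mem(2)[OF assms(1)] assms(3) by simp
  then have "Suc (apery_w S (k - 1)) mod mult S = Suc (k - 1) mod mult S"
    by (metis mod_Suc_eq)
  with assms(2,3) show ?thesis
    by simp
qed

lemma mem_iff_apery_w_le:
  assumes "numerical_semigroup S"
  shows "y \<in> S \<longleftrightarrow> apery_w S (y mod mult S) \<le> y"
proof
  assume le: "apery_w S (y mod mult S) \<le> y"
  have "y mod mult S < mult S"
    using mult_pos[OF assms] by simp
  then have w: "apery_w S (y mod mult S) \<in> S"
    and mod: "y mod mult S = apery_w S (y mod mult S) mod mult S"
    using apery_w_mem[OF assms] by simp_all
  obtain k where "y = apery_w S (y mod mult S) + mult S * k"
    using mod le by (rule mod_eq_nat1E)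
  then show "y \<in> S"
    using numerical_semigroup_add[OF assms w multiple_of_mult_mem[OF assms, of k]] by simp
qed (rule apery_w_le)

lemma atom_eq_apery_w:
  assumes "numerical_semigroup S" and "a \<in> atoms S" and "a \<noteq> mult S"
  shows "apery_w S (a mod mult S) = a" and "a mod mult S \<noteq> 0"
proof -
  let ?m = "mult S" and ?w = "apery_w S (a mod mult S)"
  have "a mod ?m = ?w mod ?m" and "?w \<le> a"
    using apery_w_le apery_w_mem(2)[OF assms(1)] atomsD(1)[OF assms(2)] mult_pos[OF assms(1)]
    by simp_all
  then obtain k where k: "a = ?w + ?m * k"
    by (rule mod_eq_nat1E)
  have "?w \<noteq> 0"
  proof
    assume "?w = 0"
    then have "k \<noteq> 0" and "k \<noteq> 1"
      using k atomsD(2)[OF assms(2)] assms(3) by auto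
    then have "a = ?m + ?m * (k - 1)" and "?m * (k - 1) \<noteq> 0"
      using k \<open>?w = 0\<close> mult_pos[OF assms(1)] by (cases k; simp)+
    then show False
      using atomsD(3)[OF assms(2) mult_mem[OF assms(1)] multiple_of_mult_mem[OF assms(1), of "k - 1"]]
        mult_pos[OF assms(1)] by simp
  qed
  then have "?m * k = 0"
    using atomsD(3)[OF assms(2) apery_w_mem(1)[OF assms(1)] multiple_of_mult_mem[OF assms(1)] k]
      mult_pos[OF assms(1)] by simp
  then show "?w = a"
    using k mult_pos[OF assms(1)] by simp
  with \<open>?w \<noteq> 0\<close> show "a mod mult S \<noteq> 0"
    using apery_w_0[OF assms(1)] by metis
qed

lemma mult_less_maxgen:
  assumes "numerical_semigroup S" and "1 < mult S"
  shows "mult S < maxgen S"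
proof (rule ccontr)
  assume "\<not> mult S < maxgen S"
  then have "a \<le> mult S" if "a \<in> atoms S" for a
    using Max_ge[OF finite_atoms[OF assms(1)] that] by (simp add: maxgen_def msg_eq_atoms[OF assms(1)])
  then have "atoms S \<subseteq> {y. mult S dvd y}"
    using Min_le[OF finite_atoms[OF assms(1)]] by (fastforce simp: mult_def msg_eq_atoms[OF assms(1)])
  then have "S \<subseteq> {y. mult S dvd y}"
    using generated_least[of "atoms S" "{y. mult S dvd y}"] generated_atoms[OF assms(1)] by auto
  moreover have "apery_w S 1 \<in> S" and "apery_w S 1 mod mult S = 1"
    using apery_w_mem[OF assms(1)] assms(2) by simp_all
  ultimately show False
    using assms(2) by (auto simp: mod_eq_0_iff_dvd[symmetric])
qed

lemma MANS_if_apery_w_Suc_less: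
  assumes "\<And>i. 1 \<le> i \<Longrightarrow> Suc i < mult S \<Longrightarrow> apery_w S i < apery_w S (Suc i)"
  shows "MANS S"
  unfolding MANS_def
proof (intro allI impI, elim conjE)
  fix i j assume "1 \<le> i" "i < j" "j \<le> mult S - 1"
  from \<open>i < j\<close> have "Suc i \<le> j"
    by simp
  then show "apery_w S i < apery_w S j"
  proof (induction rule: dec_induct)
    case base
    then show ?case
      using assms \<open>1 \<le> i\<close> \<open>i < j\<close> \<open>j \<le> mult S - 1\<close> by simp
  next
    case (step n)
    then have "Suc n < mult S"
      using \<open>j \<le> mult S - 1\<close> by arith
    with step show ?case
      using assms[of n] \<open>1 \<le> i\<close> by simp
  qed
qed

lemma MANS_if_residue_predecessors:
  assumes S: "numerical_semigroup S"
    and pred: "\<And>t. t \<in> S \<Longrightarrow> 2 \<le> t mod mult S \<Longrightarrow> \<exists>t' \<in> S. t' < t \<and> Suc t' mod mult S = t mod mult S"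
  shows "MANS S"
proof (rule MANS_if_apery_w_Suc_less)
  fix i assume "1 \<le> i" "Suc i < mult S"
  then have "apery_w S (Suc i) \<in> S" and "apery_w S (Suc i) mod mult S = Suc i"
    using apery_w_mem[OF S] by simp_all
  then obtain t where "t \<in> S" "t < apery_w S (Suc i)" "Suc t mod mult S = Suc i"
    using pred \<open>1 \<le> i\<close> by force
  moreover from this have "t mod mult S = i"
    by (simp add: mod_Suc split: if_splits)
  ultimately show "apery_w S i < apery_w S (Suc i)"
    using apery_w_le[of t S] by simp
qed

definition add_generator :: "nat set \<Rightarrow> nat \<Rightarrow> nat set" where
  "add_generator S x = generated (insert x (msg S))"

context
  fixes S :: "nat set" and x :: nat
  assumes S: "numerical_semigroup S"
begin

lemma subset_add_generator: "S \<subseteq> add_generator S x"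
  using generated_mono[of "msg S" "insert x (msg S)"] generated_atoms[OF S]
  by (auto simp: add_generator_def msg_eq_atoms[OF S])

lemma generator_mem_add_generator: "x \<in> add_generator S x"
  using generators_subset_generated[of "insert x (msg S)"] by (auto simp: add_generator_def)

lemma apery_w_mem_add_generator: "i < mult S \<Longrightarrow> apery_w S i \<in> add_generator S x"
  using apery_w_mem(1)[OF S] subset_add_generator by blast

lemma add_generator_add:
  "t \<in> add_generator S x \<Longrightarrow> u \<in> add_generator S x \<Longrightarrow> t + u \<in> add_generator S x"
  unfolding add_generator_def by (rule generated_add)

lemma add_generator_cases:
  assumes "t \<in> add_generator S x"
  shows "t \<in> S \<or> (\<exists>u \<in> add_generator S x. t = x + u)"
  using generated_insert_cases[of t x "msg S"] assms generated_atoms[OF S]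
  by (simp add: add_generator_def msg_eq_atoms[OF S])

lemma mem_add_generator_less:
  assumes "t \<in> add_generator S x" and "t < x"
  shows "t \<in> S"
  using add_generator_cases[OF assms(1)] assms(2) by auto

lemma numerical_semigroup_add_generator: "numerical_semigroup (add_generator S x)"
proof -
  have "UNIV - add_generator S x \<subseteq> UNIV - S"
    using subset_add_generator by blast
  then have "finite (UNIV - add_generator S x)"
    using S finite_subset unfolding numerical_semigroup_def by blast
  then show ?thesis
    unfolding numerical_semigroup_def
    using add_generator_add by (simp add: add_generator_def gen_zero)
qed

lemma atoms_add_generator:
  assumes "x \<notin> S" and "maxgen S < x"
  shows "atoms (add_generator S x) = insert x (atoms S)"
proof (rule antisym)
  show "atoms (add_generator S x) \<subseteq> insert x (atoms S)"
    using atoms_subset_generators by (simp add: add_generator_def msg_eq_atoms[OF S])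
  have "x \<in> atoms (add_generator S x)"
  proof (rule atomsI)
    fix a b assume ab: "a \<in> add_generator S x" "b \<in> add_generator S x" "x = a + b"
    show "a = 0 \<or> b = 0"
    proof (rule ccontr)
      assume "\<not> (a = 0 \<or> b = 0)"
      then have "a \<in> S" and "b \<in> S"
        using ab mem_add_generator_less by auto
      with ab(3) assms(1) show False
        using numerical_semigroup_add[OF S] by blast
    qed
  qed (use generator_mem_add_generator assms(1) numerical_semigroup_zero[OF S] in \<open>auto intro: gr0I\<close>)
  moreover have "g \<in> atoms (add_generator S x)" if g: "g \<in> atoms S" for g
  proof (rule atomsI)
    have "g \<le> maxgen S"
      using Max_ge[OF finite_atoms[OF S] g] by (simp add: maxgen_def msg_eq_atoms[OF S])
    with assms(2) have "g < x"
      by simp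
    fix a b assume "a \<in> add_generator S x" "b \<in> add_generator S x" "g = a + b"
    with \<open>g < x\<close> show "a = 0 \<or> b = 0"
      using atomsD(3)[OF g] mem_add_generator_less by simp
  qed (use subset_add_generator atomsD(1,2)[OF g] in auto)
  ultimately show "insert x (atoms S) \<subseteq> atoms (add_generator S x)"
    by blast
qed

lemma
  assumes "x \<notin> S" and "maxgen S < x"
  shows msg_add_generator: "msg (add_generator S x) = insert x (msg S)"
    and maxgen_add_generator: "maxgen (add_generator S x) = x"
    and mult_add_generator: "mult (add_generator S x) = mult S"
proof -
  have fin: "finite (atoms S)" and ne: "atoms S \<noteq> {}"
    using finite_atoms[OF S] atoms_nonempty[OF S] .
  show msg: "msg (add_generator S x) = insert x (msg S)"
    using atoms_add_generator[OF assms] numerical_semigroup_add_generator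
    by (simp add: msg_eq_atoms S)
  show "maxgen (add_generator S x) = x"
    using assms(2) fin ne by (simp add: maxgen_def msg msg_eq_atoms[OF S])
  have "mult S \<le> maxgen S"
    using fin ne by (simp add: mult_def maxgen_def msg_eq_atoms[OF S])
  then show "mult (add_generator S x) = mult S"
    using assms(2) fin ne by (simp add: mult_def maxgen_def msg msg_eq_atoms[OF S])
qed

lemma rgen_add_generator:
  assumes "x \<notin> S" and "maxgen S < x" and "1 < mult S"
  shows "rgen (add_generator S x) = rgen S"
proof -
  let ?R = "atoms S - {mult S}"
  have "maxgen S \<in> ?R"
    using Max_in[OF finite_atoms[OF S] atoms_nonempty[OF S]] mult_less_maxgen[OF S assms(3)]
    by (simp add: maxgen_def msg_eq_atoms[OF S])
  then have "Min ?R \<le> maxgen S" and "?R \<noteq> {}" and "finite ?R"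
    using finite_atoms[OF S] by auto
  moreover have "insert x (atoms S) - {mult S} = insert x ?R"
    using assms(2) mult_less_maxgen[OF S assms(3)] by auto
  ultimately show ?thesis
    using assms(2) by (simp add: rgen_def mult_add_generator[OF assms(1,2)]
        msg_add_generator[OF assms(1,2)] msg_eq_atoms[OF S])
qed

end

lemma
  assumes S: "numerical_semigroup S" and T: "numerical_semigroup T"
    and msg: "msg S = msg T - {maxgen T}"
  shows child_eq_add_generator: "T = add_generator S (maxgen T)"
    and child_maxgen_not_mem: "maxgen T \<notin> S"
    and maxgen_less_child_maxgen: "maxgen S < maxgen T"
proof -
  let ?x = "maxgen T"
  have x: "?x \<in> atoms T"
    using Max_in[OF finite_atoms[OF T] atoms_nonempty[OF T]] by (simp add: maxgen_def msg_eq_atoms[OF T])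
  then have atoms_T: "atoms T = insert ?x (atoms S)"
    using msg by (auto simp: msg_eq_atoms[OF S] msg_eq_atoms[OF T])
  then show T_eq: "T = add_generator S ?x"
    using generated_atoms[OF T] by (simp add: add_generator_def msg_eq_atoms[OF S])
  show "?x \<notin> S"
  proof
    assume "?x \<in> S"
    moreover have "?x \<notin> atoms S"
      using msg by (simp add: msg_eq_atoms[OF S] msg_eq_atoms[OF T])
    ultimately obtain a b where "a \<in> S" "b \<in> S" "a \<noteq> 0" "b \<noteq> 0" "?x = a + b"
      using atomsD(2)[OF x] unfolding atoms_def by blast
    moreover have "S \<subseteq> T"
      using T_eq subset_add_generator[OF S] by blast
    ultimately show False
      using atomsD(3)[OF x] by blast
  qed
  have "maxgen S \<in> atoms T - {?x}"
    using Max_in[OF finite_atoms[OF S] atoms_nonempty[OF S]] msg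
    by (simp add: maxgen_def msg_eq_atoms[OF S] msg_eq_atoms[OF T])
  then show "maxgen S < ?x"
    using Max_ge[OF finite_atoms[OF T]] by (fastforce simp: maxgen_def msg_eq_atoms[OF T])
qed

lemma children_MA_eq:
  assumes "1 < m" and "S \<in> MA m r"
  shows "children_MA m r S = add_generator S ` {x. x \<notin> S \<and> maxgen S < x \<and> MANS (add_generator S x)}"
proof -
  have S: "numerical_semigroup S" and m: "mult S = m" and r: "rgen S = r"
    using assms(2) by (simp_all add: MA_def)
  have "add_generator S x \<in> children_MA m r S"
    if "x \<notin> S" "maxgen S < x" "MANS (add_generator S x)" for x
  proof -
    have "x \<notin> msg S"
      using that(1) atomsD(1) by (auto simp: msg_eq_atoms[OF S])
    then show ?thesis
      using that assms(1) S m r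
      by (simp add: children_MA_def MA_def numerical_semigroup_add_generator mult_add_generator
          rgen_add_generator msg_add_generator maxgen_add_generator)
  qed
  moreover have "T \<in> add_generator S ` {x. x \<notin> S \<and> maxgen S < x \<and> MANS (add_generator S x)}"
    if "T \<in> children_MA m r S" for T
  proof -
    have "numerical_semigroup T" and "MANS T" and "msg S = msg T - {maxgen T}"
      using that by (simp_all add: children_MA_def MA_def)
    then show ?thesis
      using child_eq_add_generator[OF S] child_maxgen_not_mem[OF S] maxgen_less_child_maxgen[OF S]
      by (metis (mono_tags, lifting) image_eqI mem_Collect_eq)
  qed
  ultimately show ?thesis
    by blast
qed

locale mans_semigroup =
  fixes S :: "nat set"
  assumes numerical_semigroup: "numerical_semigroup S"
    and MANS: "MANS S"
    and mult_gt_1: "1 < mult S"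
begin

lemma apery_w_strict_mono:
  "1 \<le> a \<Longrightarrow> a < b \<Longrightarrow> b < mult S \<Longrightarrow> apery_w S a < apery_w S b"
  using MANS unfolding MANS_def by simp

lemma apery_w_mono:
  "1 \<le> a \<Longrightarrow> a \<le> b \<Longrightarrow> b < mult S \<Longrightarrow> apery_w S a \<le> apery_w S b"
  using apery_w_strict_mono by (cases "a = b") (auto intro: less_imp_le)

lemma not_mem_iff_less_apery_w: "y \<notin> S \<longleftrightarrow> y < apery_w S (y mod mult S)"
  using mem_iff_apery_w_le[OF numerical_semigroup] by auto

lemma frobenius_eq: "frobenius S = int (apery_w S (mult S - 1)) - int (mult S)"
proof -
  let ?m = "mult S" and ?W = "apery_w S (mult S - 1)"
  have W: "?W \<in> S" "?W mod ?m = ?m - 1"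
    using apery_w_mem[OF numerical_semigroup] mult_gt_1 by simp_all
  then have "?m \<le> ?W"
    using mult_le[OF numerical_semigroup] mult_gt_1 by (metis mod_0 diff_is_0_eq not_less)
  then have F_mod: "(?W - ?m) mod ?m = ?m - 1"
    using W(2) by (metis le_add_diff_inverse2 mod_add_self2)
  have "?W - ?m \<notin> S"
    unfolding not_mem_iff_less_apery_w F_mod using mult_gt_1 \<open>?m \<le> ?W\<close> by simp
  moreover have "y \<le> ?W - ?m" if "y \<notin> S" for y
  proof -
    have lt: "y < apery_w S (y mod ?m)"
      using that not_mem_iff_less_apery_w by simp
    then have "y mod ?m \<noteq> 0"
      using apery_w_0[OF numerical_semigroup] by (metis less_nat_zero_code)
    moreover have "y mod ?m \<le> ?m - 1"
      using mod_less_divisor[of "?m" y] mult_gt_1 by linarith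
    ultimately have "apery_w S (y mod ?m) \<le> ?W"
      using apery_w_mono mult_gt_1 by simp
    moreover have "y + ?m \<le> apery_w S (y mod ?m)"
      using mod_eq_less_imp_add_le[OF _ lt] apery_w_mem(2)[OF numerical_semigroup] mult_gt_1 by simp
    ultimately show ?thesis
      by simp
  qed
  ultimately have "Max (UNIV - S) = ?W - ?m"
    using numerical_semigroup by (intro Max_eqI) (auto simp: numerical_semigroup_def)
  with \<open>?m \<le> ?W\<close> show ?thesis
    by (simp add: frobenius_def)
qed

lemma maxgen_mem_atoms: "maxgen S \<in> atoms S"
  using Max_in[OF finite_atoms atoms_nonempty] numerical_semigroup
  by (simp add: maxgen_def msg_eq_atoms)

lemma apery_w_mod_maxgen: "apery_w S (maxgen S mod mult S) = maxgen S"
  and mod_maxgen_pos: "0 < maxgen S mod mult S"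
  using atom_eq_apery_w[OF numerical_semigroup maxgen_mem_atoms]
    mult_less_maxgen[OF numerical_semigroup mult_gt_1] by auto

lemma mod_maxgen_less_if_not_mem:
  assumes "y \<notin> S" and "maxgen S < y"
  shows "maxgen S mod mult S < y mod mult S"
proof (rule ccontr)
  assume "\<not> ?thesis"
  moreover have "y mod mult S \<noteq> 0"
    using assms(1) not_mem_iff_less_apery_w apery_w_0[OF numerical_semigroup] by (metis less_nat_zero_code)
  ultimately have "apery_w S (y mod mult S) \<le> maxgen S"
    using apery_w_mono[of "y mod mult S" "maxgen S mod mult S"] apery_w_mod_maxgen mult_gt_1 by simp
  with assms show False
    using not_mem_iff_less_apery_w by simp
qed

lemma maxgen_less_if_apery_w_pred_less:
  assumes "maxgen S mod mult S < x mod mult S" and "apery_w S (x mod mult S - 1) < x"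
  shows "maxgen S < x"
proof -
  have "maxgen S mod mult S \<le> x mod mult S - 1" and "x mod mult S - 1 < mult S"
    using assms(1) mod_less_divisor[of "mult S" x] mult_gt_1 by linarith+
  then have "maxgen S \<le> apery_w S (x mod mult S - 1)"
    using apery_w_mono[of "maxgen S mod mult S" "x mod mult S - 1"] apery_w_mod_maxgen
      mod_maxgen_pos by simp
  with assms(2) show ?thesis
    by simp
qed

lemma apery_w_pred_less_if_MANS_add_generator:
  assumes "x \<notin> S" and "maxgen S < x" and "MANS (add_generator S x)"
  shows "apery_w S (x mod mult S - 1) < x"
proof -
  let ?m = "mult S" and ?T = "add_generator S x" and ?i = "x mod mult S"
  have T: "numerical_semigroup ?T" and mult_T: "mult ?T = ?m"
    using numerical_semigroup_add_generator mult_add_generator assms(1,2) numerical_semigroup by auto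
  have "2 \<le> ?i" and "?i < ?m"
    using mod_maxgen_less_if_not_mem[OF assms(1,2)] mod_maxgen_pos mult_gt_1 by auto
  then have "1 \<le> ?i - 1" and "?i - 1 < ?i" and "?i \<le> ?m - 1"
    by auto
  then have "apery_w ?T (?i - 1) < apery_w ?T ?i"
    using assms(3) unfolding MANS_def mult_T by blast
  also have "\<dots> \<le> x"
    using apery_w_le[OF generator_mem_add_generator[OF numerical_semigroup, of x]] mult_T by simp
  finally have lt: "apery_w ?T (?i - 1) < x" .
  moreover have "apery_w ?T (?i - 1) \<in> S" and "apery_w ?T (?i - 1) mod ?m = ?i - 1"
    using apery_w_mem[OF T] mem_add_generator_less[OF numerical_semigroup _ lt] \<open>?i < ?m\<close> mult_T
    by simp_all
  ultimately show ?thesis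
    using apery_w_le[of "apery_w ?T (?i - 1)" S] by simp
qed

lemma apery_w_pred_less:
  assumes "t \<in> S" and "2 \<le> t mod mult S"
  shows "apery_w S (t mod mult S - 1) < t"
proof -
  have "apery_w S (t mod mult S - 1) < apery_w S (t mod mult S)"
    using apery_w_strict_mono assms(2) mult_gt_1 by simp
  also have "\<dots> \<le> t"
    using apery_w_le[OF assms(1)] .
  finally show ?thesis .
qed

lemma residue_predecessor_add_generator:
  assumes "0 < x mod mult S" and "apery_w S (x mod mult S - 1) < x"
    and "t \<in> add_generator S x" and "2 \<le> t mod mult S"
  shows "\<exists>t' \<in> add_generator S x. t' < t \<and> Suc t' mod mult S = t mod mult S"
  using assms(3,4)
proof (induction t rule: less_induct)
  case (less t)
  let ?m = "mult S" and ?T = "add_generator S x" and ?i = "x mod mult S"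
  have mod_less: "y mod ?m < ?m" for y
    using mult_gt_1 by simp
  have pred_mem: "apery_w S (y mod ?m - 1) \<in> ?T" for y
    using apery_w_mem_add_generator[OF numerical_semigroup] mod_less by (simp add: less_imp_diff_less)
  have x_mem: "x \<in> ?T"
    using generator_mem_add_generator[OF numerical_semigroup] .
  consider "t \<in> S" | u where "u \<in> ?T" "t = x + u"
    using add_generator_cases[OF numerical_semigroup less.prems(1)] by blast
  then show ?case
  proof cases
    case 1
    then show ?thesis
      using apery_w_pred_less pred_mem mod_less Suc_apery_w_pred_mod[OF numerical_semigroup] less.prems(2)
      by (intro bexI[of _ "apery_w S (t mod ?m - 1)"]) auto
  next
    case (2 u)
    consider "u mod ?m = 0" | "u mod ?m = 1" | "2 \<le> u mod ?m"
      by linarith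
    then show ?thesis
    proof cases
      case 1
      then have "t mod ?m = ?i"
        using \<open>t = x + u\<close> by (simp add: mod_add_right_eq[symmetric])
      then show ?thesis
        using \<open>t = x + u\<close> assms(1,2) pred_mem mod_less Suc_apery_w_pred_mod[OF numerical_semigroup]
        by (intro bexI[of _ "apery_w S (?i - 1)"]) auto
    next
      case 2
      then have "u \<noteq> 0"
        by (metis mod_0 zero_neq_one)
      moreover have "Suc x mod ?m = t mod ?m"
        using 2 \<open>t = x + u\<close> mod_add_right_eq[of x u ?m] by simp
      ultimately show ?thesis
        using x_mem \<open>t = x + u\<close> by (intro bexI[of _ x]) auto
    next
      case 3
      have "x \<noteq> 0"
        using assms(1) by (metis mod_0 less_irrefl)
      then have "u < t"
        using \<open>t = x + u\<close> by simp
      then obtain u' where "u' \<in> ?T" "u' < u" "Suc u' mod ?m = u mod ?m"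
        using less.IH \<open>u \<in> ?T\<close> 3 by blast
      moreover from this have "Suc (x + u') mod ?m = t mod ?m"
        using \<open>t = x + u\<close> mod_add_right_eq[of x "Suc u'" ?m] mod_add_right_eq[of x u ?m] by simp
      ultimately show ?thesis
        using \<open>t = x + u\<close> x_mem add_generator_add[OF numerical_semigroup]
        by (intro bexI[of _ "x + u'"]) auto
    qed
  qed
qed

lemma MANS_add_generator:
  assumes "maxgen S mod mult S < x mod mult S"
    and "apery_w S (x mod mult S - 1) < x" and "x < apery_w S (x mod mult S)"
  shows "MANS (add_generator S x)"
proof -
  have "x \<notin> S"
    using assms(3) not_mem_iff_less_apery_w by simp
  moreover have "maxgen S < x"
    using maxgen_less_if_apery_w_pred_less assms(1,2) .
  ultimately have "numerical_semigroup (add_generator S x)" and "mult (add_generator S x) = mult S"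
    using numerical_semigroup_add_generator mult_add_generator numerical_semigroup by auto
  moreover have "0 < x mod mult S"
    using assms(1) by simp
  ultimately show ?thesis
    using MANS_if_residue_predecessors residue_predecessor_add_generator assms(2) by metis
qed

lemma child_generators_eq:
  "{x. x \<notin> S \<and> maxgen S < x \<and> MANS (add_generator S x)} =
   {x. maxgen S mod mult S < x mod mult S \<and> apery_w S (x mod mult S - 1) < x \<and> x < apery_w S (x mod mult S)}"
  using mod_maxgen_less_if_not_mem apery_w_pred_less_if_MANS_add_generator not_mem_iff_less_apery_w
    MANS_add_generator maxgen_less_if_apery_w_pred_less by blast

lemma card_apery_gaps:
  assumes "1 \<le> j" and "j < mult S"
  shows "mult S * card {x. j < x mod mult S \<and> apery_w S (x mod mult S - 1) < x
                            \<and> x < apery_w S (x mod mult S)}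
           + (mult S - 1 - j) + apery_w S j = apery_w S (mult S - 1)"
proof -
  let ?m = "mult S" and ?w = "apery_w S"
  define C where "C n = {x. j < x mod ?m \<and> x mod ?m \<le> n \<and> ?w (x mod ?m - 1) < x \<and> x < ?w (x mod ?m)}"
    for n
  have fin: "finite (C n)" for n
  proof (rule finite_subset)
    show "C n \<subseteq> UNIV - S"
      using not_mem_iff_less_apery_w by (auto simp: C_def)
  qed (use numerical_semigroup in \<open>simp add: numerical_semigroup_def\<close>)
  have count: "n < ?m \<longrightarrow> ?m * card (C n) + (n - j) + ?w j = ?w n" if "j \<le> n" for n
    using that
  proof (induction rule: dec_induct)
    case base
    have "C j = {}"
      by (auto simp: C_def)
    then show ?case
      by simp
  next
    case (step n)
    let ?Z = "{x. ?w n < x \<and> x < ?w (Suc n) \<and> x mod ?m = Suc n}"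
    show ?case
    proof
      assume "Suc n < ?m"
      have "?w n < ?w (Suc n)"
        using apery_w_strict_mono \<open>Suc n < ?m\<close> step.hyps assms(1) by simp
      moreover have "?w n mod ?m = n" and "?w (Suc n) mod ?m = Suc n"
        using apery_w_mem(2)[OF numerical_semigroup] \<open>Suc n < ?m\<close> by simp_all
      moreover have "Suc (?w n) mod ?m = Suc (?w n mod ?m) mod ?m"
        by (simp add: mod_Suc_eq)
      ultimately have Z: "?m * card ?Z + Suc (?w n) = ?w (Suc n)"
        using card_mod_class_interval[of ?m "?w n" "?w (Suc n)"] mult_gt_1 \<open>Suc n < ?m\<close>
        by simp
      have "C (Suc n) = C n \<union> ?Z"
        using step.hyps by (auto simp: C_def le_Suc_eq)
      moreover have "C n \<inter> ?Z = {}"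
        by (auto simp: C_def)
      moreover have "finite ?Z"
        by (rule finite_subset[of _ "{..< ?w (Suc n)}"]) auto
      ultimately have "card (C (Suc n)) = card (C n) + card ?Z"
        using fin by (simp add: card_Un_disjoint)
      then show "?m * card (C (Suc n)) + (Suc n - j) + ?w j = ?w (Suc n)"
        using step.IH \<open>Suc n < ?m\<close> step.hyps Z by (simp add: algebra_simps Suc_diff_le)
    qed
  qed
  have "x mod ?m \<le> ?m - 1" for x
    using mod_less_divisor[of ?m x] mult_gt_1 by linarith
  then have "C (?m - 1) = {x. j < x mod ?m \<and> ?w (x mod ?m - 1) < x \<and> x < ?w (x mod ?m)}"
    unfolding C_def by blast
  then show ?thesis
    using count[of "?m - 1"] assms by simp
qed

lemma card_child_generators:
  "int (card {x. x \<notin> S \<and> maxgen S < x \<and> MANS (add_generator S x)})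
     = (frobenius S - int (maxgen S)) div int (mult S) + 1"
proof -
  let ?m = "mult S" and ?j = "maxgen S mod mult S"
  let ?c = "card {x. x \<notin> S \<and> maxgen S < x \<and> MANS (add_generator S x)}"
  have "?m * ?c + (?m - 1 - ?j) + maxgen S = apery_w S (?m - 1)"
    using card_apery_gaps[of ?j] mod_maxgen_pos mult_gt_1 apery_w_mod_maxgen
    by (simp add: child_generators_eq)
  then have "int (apery_w S (?m - 1)) = int (?m * ?c + (?m - 1 - ?j)) + int (maxgen S)"
    by (metis of_nat_add)
  then have "frobenius S - int (maxgen S) = int (?m * ?c + (?m - 1 - ?j)) - int ?m"
    by (simp add: frobenius_eq)
  moreover have "?m - 1 - ?j < ?m"
    using mult_gt_1 by simp
  ultimately show ?thesis
    using int_div_add_mult[of "?m - 1 - ?j" ?m ?c] by simp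
qed

end

theorem proposition4p15:
  fixes m r :: nat and S :: "nat set"
  assumes "m > 1" and "r > 2" and "S \<in> MA m r"
  shows "int (card (children_MA m r S)) = (frobenius S - int (maxgen S)) div int m + 1"
proof -
  have S: "numerical_semigroup S" and "MANS S" and m: "mult S = m"
    using assms(3) by (simp_all add: MA_def)
  then interpret mans_semigroup S
    using assms(1) by unfold_locales simp_all
  have "inj_on (add_generator S) {x. x \<notin> S \<and> maxgen S < x \<and> MANS (add_generator S x)}"
    by (rule inj_onI) (metis (no_types, lifting) maxgen_add_generator[OF S] mem_Collect_eq)
  then show ?thesis
    using card_child_generators children_MA_eq[OF assms(1,3)] m by (simp add: card_image)
qed

end
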